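(* Let $n\ge1$, $\mathcal{N}=\mathbb{C}^{2^n}$. For every $\phi\in\mathcal{N}$, every $i\in[n]$ and every $S\subseteq\{0,1\}^{n-1}$, $$|\phi^*E_{i,S}\phi-\phi^*\phi|\le 2^{n-1}I_i(\phi).$$
   Context: A vector $\phi=\sum_x\phi(x)|x\rangle\in\mathcal{N}$ is identified with the function $\phi:\{0,1\}^n\to\mathbb{C}$. $I_i(\phi)=\mathbb{E}_{x\in\{0,1\}^n}|\phi(x)-\phi(x\oplus e_i)|^2$, with $e_i$ the $i$-th unit vector. $E_{i,S}$ is the linear operator with $E_{i,S}|x\rangle=|x\oplus e_i\rangle$ if $(x_1,\dots,x_{i-1},x_{i+1},\dots,x_n)\in S$ and $E_{i,S}|x\rangle=|x\rangle$ otherwise. *)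

theory Defs
  imports Complex_Main
begin

text \<open>The Boolean cube \<open>{0,1}^n\<close>, realised as bit lists of length n
  (True = 1). A vector \<open>\<phi>\<in>\<complex>^(2^n)\<close> is a function on the cube.
  Coordinates are indexed 1..n as in the paper.\<close>

definition cube :: "nat \<Rightarrow> bool list set" where
  "cube n = {x. length x = n}"

definition flip :: "nat \<Rightarrow> bool list \<Rightarrow> bool list" where
  "flip i x = x[i - 1 := \<not> x ! (i - 1)]"

definition drop_coord :: "nat \<Rightarrow> bool list \<Rightarrow> bool list" where
  "drop_coord i x = take (i - 1) x @ drop i x"

definition influence :: "nat \<Rightarrow> nat \<Rightarrow> (bool list \<Rightarrow> complex) \<Rightarrow> real" where
  "influence n i \<phi> =
     (\<Sum>x\<in>cube n. (cmod (\<phi> x - \<phi> (flip i x)))\<^sup>2) / 2 ^ n"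

definition E_map :: "nat \<Rightarrow> bool list set \<Rightarrow> bool list \<Rightarrow> bool list" where
  "E_map i S x = (if drop_coord i x \<in> S then flip i x else x)"

text \<open>Matrix entries \<open><z|E_{i,S}|x>\<close>.\<close>
definition E_op :: "nat \<Rightarrow> bool list set \<Rightarrow> bool list \<Rightarrow> bool list \<Rightarrow> complex" where
  "E_op i S z x = (if z = E_map i S x then 1 else 0)"

definition qform :: "nat \<Rightarrow> (bool list \<Rightarrow> bool list \<Rightarrow> complex) \<Rightarrow> (bool list \<Rightarrow> complex) \<Rightarrow> complex" where
  "qform n M \<phi> = (\<Sum>z\<in>cube n. \<Sum>x\<in>cube n. cnj (\<phi> z) * M z x * \<phi> x)"

definition sqnorm :: "nat \<Rightarrow> (bool list \<Rightarrow> complex) \<Rightarrow> complex" where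
  "sqnorm n \<phi> = (\<Sum>x\<in>cube n. cnj (\<phi> x) * \<phi> x)"

end

theory Submission
  imports Defs
begin

text \<open>Only basis vectors \<open>x\<close> in \<open>T = {x. drop_coord i x \<in> S}\<close> are moved by \<open>E_{i,S}\<close>,
  and \<open>T\<close> is closed under the involution \<open>x \<mapsto> x \<oplus> e_i\<close>. Hence
  \<open>\<phi>\<^sup>*E_{i,S}\<phi> - \<phi>\<^sup>*\<phi>\<close> is the sum over \<open>T\<close> of \<open>cnj (\<phi>(x \<oplus> e_i) - \<phi>(x)) \<phi>(x)\<close>; averaging it with
  its reindexing along the involution turns it into \<open>-1/2\<close> times the sum over \<open>T\<close> of
  \<open>|\<phi>(x) - \<phi>(x \<oplus> e_i)|\<^sup>2\<close>, whose modulus is at most half the sum over the whole cube,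
  i.e. \<open>2^(n-1) I_i(\<phi>)\<close>.\<close>

lemma finite_cube: "finite (cube n)"
  using finite_lists_length_eq[of "UNIV :: bool set" n] by (simp add: cube_def)

lemma flip_in_cube: "x \<in> cube n \<Longrightarrow> flip i x \<in> cube n"
  by (simp add: cube_def flip_def)

lemma flip_flip [simp]: "flip i (flip i x) = x"
  by (cases "i - 1 < length x") (simp_all add: flip_def list_update_beyond)

lemma drop_coord_flip: "i \<ge> 1 \<Longrightarrow> drop_coord i (flip i x) = drop_coord i x"
  by (simp add: drop_coord_def flip_def)

lemma E_map_in_cube: "x \<in> cube n \<Longrightarrow> E_map i S x \<in> cube n"
  by (simp add: E_map_def flip_in_cube)

lemma qform_E_op:
  "qform n (E_op i S) \<phi> = (\<Sum>x\<in>cube n. cnj (\<phi> (E_map i S x)) * \<phi> x)"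
proof -
  have "qform n (E_op i S) \<phi> = (\<Sum>x\<in>cube n. \<Sum>z\<in>cube n. cnj (\<phi> z) * E_op i S z x * \<phi> x)"
    unfolding qform_def by (rule sum.swap)
  also have "\<dots> = (\<Sum>x\<in>cube n. cnj (\<phi> (E_map i S x)) * \<phi> x)"
  proof (rule sum.cong [OF refl])
    fix x assume "x \<in> cube n"
    have "(\<Sum>z\<in>cube n. cnj (\<phi> z) * E_op i S z x * \<phi> x) =
        (\<Sum>z\<in>cube n. if z = E_map i S x then cnj (\<phi> z) * \<phi> x else 0)"
      by (rule sum.cong) (auto simp: E_op_def)
    then show "(\<Sum>z\<in>cube n. cnj (\<phi> z) * E_op i S z x * \<phi> x) = cnj (\<phi> (E_map i S x)) * \<phi> x"
      using finite_cube E_map_in_cube [OF \<open>x \<in> cube n\<close>] by (simp add: sum.delta')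
  qed
  finally show ?thesis .
qed

lemma qform_E_op_minus_sqnorm:
  "qform n (E_op i S) \<phi> - sqnorm n \<phi> =
     (\<Sum>x\<in>{x \<in> cube n. drop_coord i x \<in> S}. cnj (\<phi> (flip i x) - \<phi> x) * \<phi> x)"
proof -
  have "qform n (E_op i S) \<phi> - sqnorm n \<phi> =
      (\<Sum>x\<in>cube n. if drop_coord i x \<in> S then cnj (\<phi> (flip i x) - \<phi> x) * \<phi> x else 0)"
    unfolding qform_E_op sqnorm_def sum_subtractf[symmetric]
    by (rule sum.cong) (auto simp: E_map_def algebra_simps)
  then show ?thesis
    by (simp only: sum.inter_filter [OF finite_cube])
qed

lemma sum_cnj_diff_mult_involution:
  fixes \<phi> :: "'a \<Rightarrow> complex"
  assumes f_in: "\<And>x. x \<in> T \<Longrightarrow> f x \<in> T" and f_f: "\<And>x. x \<in> T \<Longrightarrow> f (f x) = x"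
  shows "2 * (\<Sum>x\<in>T. cnj (\<phi> (f x) - \<phi> x) * \<phi> x) =
           - of_real (\<Sum>x\<in>T. (cmod (\<phi> x - \<phi> (f x)))\<^sup>2)"
proof -
  define g where "g x = cnj (\<phi> (f x) - \<phi> x) * \<phi> x" for x
  have "sum g T = (\<Sum>x\<in>T. g (f x))"
    by (rule sum.reindex_bij_witness[where i=f and j=f]) (auto simp: f_in f_f)
  then have "2 * sum g T = (\<Sum>x\<in>T. g x + g (f x))"
    by (simp add: sum.distrib)
  also have "\<dots> = (\<Sum>x\<in>T. - of_real ((cmod (\<phi> x - \<phi> (f x)))\<^sup>2))"
  proof (rule sum.cong [OF refl])
    fix x assume "x \<in> T"
    then have "g x + g (f x) = - (cnj (\<phi> x - \<phi> (f x)) * (\<phi> x - \<phi> (f x)))"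
      by (simp add: g_def f_f algebra_simps)
    also have "\<dots> = - of_real ((cmod (\<phi> x - \<phi> (f x)))\<^sup>2)"
      using complex_norm_square [of "\<phi> x - \<phi> (f x)"] by (simp only: mult.commute)
    finally show "g x + g (f x) = - of_real ((cmod (\<phi> x - \<phi> (f x)))\<^sup>2)" .
  qed
  finally show ?thesis
    by (simp add: g_def sum_negf)
qed

theorem lemma1:
  fixes n i :: nat and \<phi> :: "bool list \<Rightarrow> complex" and S :: "bool list set"
  assumes "n \<ge> 1" and "i \<in> {1..n}" and "S \<subseteq> cube (n - 1)"
  shows "cmod (qform n (E_op i S) \<phi> - sqnorm n \<phi>) \<le> 2 ^ (n - 1) * influence n i \<phi>"
proof -
  define T where "T = {x \<in> cube n. drop_coord i x \<in> S}"
  define d where "d x = (cmod (\<phi> x - \<phi> (flip i x)))\<^sup>2" for x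
  have "T \<subseteq> cube n" by (simp add: T_def)
  have flip_in_T: "flip i x \<in> T" if "x \<in> T" for x
    using that assms(2) flip_in_cube drop_coord_flip by (auto simp: T_def)
  have "2 * (qform n (E_op i S) \<phi> - sqnorm n \<phi>) = - of_real (sum d T)"
    unfolding qform_E_op_minus_sqnorm T_def [symmetric] d_def
    by (rule sum_cnj_diff_mult_involution) (simp_all add: flip_in_T)
  then have "2 * cmod (qform n (E_op i S) \<phi> - sqnorm n \<phi>) = sum d T"
    by (metis abs_of_nonneg d_def norm_minus_cancel norm_mult norm_numeral norm_of_real
        sum_nonneg zero_le_power2)
  also have "\<dots> \<le> sum d (cube n)"
    using finite_cube \<open>T \<subseteq> cube n\<close> by (intro sum_mono2) (auto simp: d_def)
  also have "\<dots> = 2 * (2 ^ (n - 1) * influence n i \<phi>)"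
    using assms(1) by (cases n) (auto simp: influence_def d_def)
  finally show ?thesis by simp
qed

end
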